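(* Fix a layer $\ell$ of a neural network with weight matrix $W_\ell\in\mathbb{R}^{m\times n}$ and a perturbation $E_\ell\in\mathbb{R}^{m\times n}$, and set $\widehat W_\ell=W_\ell-E_\ell$. Let $z$ and $z'$ be independent random samples ($z$ from a training distribution, $z'$ from a possibly different validation distribution). For a sample $z$ let $h_\ell(z)\in\mathbb{R}^n$ be the input to layer $\ell$ (independent of $W_\ell$), $\delta_\ell(z)\in\mathbb{R}^m$ the upstream gradient at layer $\ell$ under weights $W_\ell$, and $\widehat\delta_\ell(z)$ the upstream gradient under weights $\widehat W_\ell$. Let $C_{h,\ell}=\mathbb{E}_z[h_\ell(z)h_\ell(z)^\top]$ and $C_{\delta,\ell}=\mathbb{E}_z[\delta_\ell(z)\delta_\ell(z)^\top]$, assumed symmetric positive definite, and set $\tilde h_\ell=C_{h,\ell}^{-1/2}h_\ell$, $\tilde\delta_\ell=C_{\delta,\ell}^{-1/2}\delta_\ell$, $\widehat{\tilde\delta}_\ell=C_{\delta,\ell}^{-1/2}\widehat\delta_\ell$, $\Delta\tilde\delta_\ell=\widehat{\tilde\delta}_\ell-\tilde\delta_\ell$. Define the layer-$\ell$ influence-function contributions $$I_{\mathrm{IF},W_\ell}(z,z')=-\langle\tilde h_\ell(z'),\tilde h_\ell(z)\rangle\,\langle\tilde\delta_\ell(z'),\tilde\delta_\ell(z)\rangle,\qquad I_{\mathrm{IF},\widehat W_\ell}(z,z')=-\langle\tilde h_\ell(z'),\tilde h_\ell(z)\rangle\,\langle\widehat{\tilde\delta}_\ell(z'),\widehat{\tilde\delta}_\ell(z)\rangle,$$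 the first-order term $$\Delta I^{(1)}(z,z')=-\langle\Delta\tilde\delta_\ell(z'),\tilde\delta_\ell(z)\rangle\langle\tilde h_\ell(z'),\tilde h_\ell(z)\rangle-\langle\tilde\delta_\ell(z'),\Delta\tilde\delta_\ell(z)\rangle\langle\tilde h_\ell(z'),\tilde h_\ell(z)\rangle,$$ and the remainder $R(z,z')=I_{\mathrm{IF},\widehat W_\ell}(z,z')-I_{\mathrm{IF},W_\ell}(z,z')-\Delta I^{(1)}(z,z')$. Assume: (B1) $\mathbb{E}_z[\|\tilde\delta_\ell(z)\|\|\tilde h_\ell(z)\|]$ and $\mathbb{E}_{z'}[\|\tilde\delta_\ell(z')\|\|\tilde h_\ell(z')\|]$ are finite. (B2) There is a measurable $K(\cdot)\ge0$ with $\|\widehat\delta_\ell(z)-\delta_\ell(z)\|\le K(z)\|E_\ell\|_F$ (for $z$ and $z'$), and $\mathbb{E}_z[K(z)\|\tilde h_\ell(z)\|]$, $\mathbb{E}_{z'}[K(z')\|\tilde h_\ell(z')\|]$ are finite. (B3) There exist $\rho>0$ and $c_{\mathrm{rem}}$ such that whenever $\|C_{\delta,\ell}^{-1/2}(W_\ell-\widehat W_\ell)C_{h,\ell}^{-1/2}\|_F\le\rho$, one has $\mathbb{E}_{z,z'}|R(z,z')|\le c_{\mathrm{rem}}\|C_{\delta,\ell}^{-1/2}E_\ell C_{h,\ell}^{-1/2}\|_F^2$. Then there exists a finite, data-dependent constant $C_\kappa>0$ such that $$\mathbb{E}_{z,z'}\big|I_{\mathrm{IF},\widehat W_\ell}(z,z')-I_{\mathrm{IF},W_\ell}(z,z')\big|\le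 C_\kappa\,\big\|C_{\delta,\ell}^{-1/2}E_\ell C_{h,\ell}^{-1/2}\big\|_F.$$
   Context: Norms and inner products are Euclidean, $\|\cdot\|_F$ is the Frobenius norm, and $M^{-1/2}$ denotes the inverse of the symmetric positive definite square root. The quantity $I_{\mathrm{IF},W_\ell}$ is the layer-$\ell$ influence-function score $-\nabla_{w_\ell}L(z')^\top\tilde{\mathcal H}_\ell^{-1}\nabla_{w_\ell}L(z)$ under the Kronecker-factored (K-FAC) Hessian approximation $\tilde{\mathcal H}_\ell=C_{h,\ell}\otimes C_{\delta,\ell}$, where $w_\ell=\mathrm{vec}(W_\ell)$ and $\nabla_{w_\ell}L(z)=h_\ell(z)\otimes\delta_\ell(z)$. *)

theory Defs
  imports "HOL-Analysis.Analysis" "HOL-Probability.Probability"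
begin

definition spd_mat :: "real^'n^'n \<Rightarrow> bool" where
  "spd_mat A \<longleftrightarrow> transpose A = A \<and> (\<forall>x. x \<noteq> 0 \<longrightarrow> x \<bullet> (A *v x) > 0)"

definition spd_sqrt :: "real^'n^'n \<Rightarrow> real^'n^'n" where
  "spd_sqrt A = (THE S. spd_mat S \<and> S ** S = A)"

definition inv_sqrt :: "real^'n^'n \<Rightarrow> real^'n^'n" where
  "inv_sqrt A = matrix_inv (spd_sqrt A)"

definition frob_norm :: "real^'n^'m \<Rightarrow> real" where
  "frob_norm A = sqrt (\<Sum>i\<in>UNIV. \<Sum>j\<in>UNIV. (A $ i $ j)^2)"

definition outer :: "real^'m \<Rightarrow> real^'n \<Rightarrow> real^'n^'m" where
  "outer x y = (\<chi> i j. x $ i * y $ j)"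

definition IF_score :: "real^'n^'n \<Rightarrow> real^'m^'m \<Rightarrow> ('z \<Rightarrow> real^'n) \<Rightarrow> ('z \<Rightarrow> real^'m)
    \<Rightarrow> 'z \<Rightarrow> 'z \<Rightarrow> real" where
  "IF_score Sh Sd h d z z' =
     - (((Sh *v h z') \<bullet> (Sh *v h z)) * ((Sd *v d z') \<bullet> (Sd *v d z)))"

definition first_order_term :: "real^'n^'n \<Rightarrow> real^'m^'m \<Rightarrow> ('z \<Rightarrow> real^'n) \<Rightarrow> ('z \<Rightarrow> real^'m)
    \<Rightarrow> ('z \<Rightarrow> real^'m) \<Rightarrow> 'z \<Rightarrow> 'z \<Rightarrow> real" where
  "first_order_term Sh Sd h d dhat z z' =
     (let ht = (\<lambda>x. Sh *v h x); dt = (\<lambda>x. Sd *v d x);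
          Dd = (\<lambda>x. Sd *v dhat x - Sd *v d x)
      in - ((Dd z' \<bullet> dt z) * (ht z' \<bullet> ht z)) - ((dt z' \<bullet> Dd z) * (ht z' \<bullet> ht z)))"

definition remainder_term :: "real^'n^'n \<Rightarrow> real^'m^'m \<Rightarrow> ('z \<Rightarrow> real^'n) \<Rightarrow> ('z \<Rightarrow> real^'m)
    \<Rightarrow> ('z \<Rightarrow> real^'m) \<Rightarrow> 'z \<Rightarrow> 'z \<Rightarrow> real" where
  "remainder_term Sh Sd h d dhat z z' =
     IF_score Sh Sd h dhat z z' - IF_score Sh Sd h d z z' - first_order_term Sh Sd h d dhat z z'"

end

theory Submission
  imports Defs
begin

(* Write X = C_d^(-1/2) E C_h^(-1/2) for the whitened perturbation.  By Cauchy-Schwarz and (B2), the first-order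
   term at (z, z') is at most |C_d^(-1/2)| |E| (f z * g z' + g z * f z') with f = |d~| |h~| and
   g = K |h~|.  Its expectation under the product measure factorises into the moments that (B1)
   and (B2) assume finite.  Since E = C_d^(1/2) X C_h^(1/2) and the Frobenius norm is
   submultiplicative, |E| <= |C_d^(1/2)| |C_h^(1/2)| |X|.  On the ball |X| <= rho, (B3) bounds the
   remainder by c_rem |X|^2 <= max c_rem 0 * rho * |X|.  The invertible square roots exist by the
   spectral theorem for symmetric matrices, obtained here by maximising the Rayleigh quotient on
   invariant subspaces. *)

lemma inner_matrix_vector_mult_symmetric:
  fixes A :: "real^'n^'n"
  assumes "transpose A = A"
  shows "(A *v x) \<bullet> y = x \<bullet> (A *v y)"
  by (metis assms dot_lmul_matrix transpose_matrix_vector)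

lemma nonneg_quadratic_imp_linear_coeff_zero:
  fixes b c :: real
  assumes nonneg: "\<And>t. 0 \<le> 2 * t * b + t\<^sup>2 * c"
  shows "b = 0"
proof -
  define s where "s = \<bar>c\<bar> + 1"
  have s: "s > 0" "c \<le> s" by (auto simp: s_def)
  have "0 \<le> s\<^sup>2 * (2 * (- b / s) * b + (- b / s)\<^sup>2 * c)"
    by (rule mult_nonneg_nonneg[OF zero_le_power2 nonneg])
  also have "\<dots> = b\<^sup>2 * c - 2 * b\<^sup>2 * s"
    using s by (simp add: field_simps power2_eq_square)
  also have "\<dots> \<le> - (b\<^sup>2 * s)"
    using mult_left_mono[OF s(2), of "b\<^sup>2"] by (simp add: mult.commute)
  finally show ?thesis using s(1) by (simp add: mult_le_0_iff)
qed

lemma psd_on_subspace_null_vector: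
  fixes G :: "real^'n^'n"
  assumes sym: "transpose G = G" and V: "subspace V"
    and psd: "\<And>x. x \<in> V \<Longrightarrow> 0 \<le> x \<bullet> (G *v x)"
    and v: "v \<in> V" "v \<bullet> (G *v v) = 0" and y: "y \<in> V"
  shows "y \<bullet> (G *v v) = 0"
proof (rule nonneg_quadratic_imp_linear_coeff_zero)
  fix t :: real
  have "v + t *\<^sub>R y \<in> V" using V v y by (simp add: subspace_add subspace_scale)
  then have "0 \<le> (v + t *\<^sub>R y) \<bullet> (G *v (v + t *\<^sub>R y))" by (rule psd)
  also have "\<dots> = 2 * t * (y \<bullet> (G *v v)) + t\<^sup>2 * (y \<bullet> (G *v y))"
    using v(2) inner_matrix_vector_mult_symmetric[OF sym, of y v]
    by (simp add: algebra_simps inner_add_left inner_add_right power2_eq_square inner_commute)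
  finally show "0 \<le> 2 * t * (y \<bullet> (G *v v)) + t\<^sup>2 * (y \<bullet> (G *v y))" .
qed

lemma symmetric_matrix_eigenvector_in_invariant_subspace:
  fixes A :: "real^'n^'n"
  assumes sym: "transpose A = A" and V: "subspace V" and nontrivial: "V \<noteq> {0}"
    and inv: "\<And>x. x \<in> V \<Longrightarrow> A *v x \<in> V"
  obtains v l where "v \<in> V" "norm v = 1" "A *v v = l *\<^sub>R v"
proof -
  define S where "S = V \<inter> sphere 0 1"
  obtain x where x: "x \<in> V" "x \<noteq> 0" using nontrivial V subspace_0 by blast
  have "x /\<^sub>R norm x \<in> S" using x V by (simp add: S_def subspace_scale)
  moreover have "compact S" unfolding S_def
    using closed_subspace[OF V] compact_sphere by (simp add: closed_Int_compact)
  moreover have "continuous_on S (\<lambda>x. x \<bullet> (A *v x))"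
    by (intro continuous_intros matrix_vector_mult_linear_continuous_on)
  ultimately obtain v
    where v: "v \<in> S" and vmax: "\<And>y. y \<in> S \<Longrightarrow> y \<bullet> (A *v y) \<le> v \<bullet> (A *v v)"
    using continuous_attains_sup[of S] by blast
  \<comment> \<open>The Rayleigh quotient is maximal at \<open>v\<close>, so \<open>l I - A\<close> is positive semidefinite
    on \<open>V\<close> and vanishes at \<open>v\<close>.\<close>
  define l where "l = v \<bullet> (A *v v)"
  define G where "G = l *\<^sub>R mat 1 - A"
  have G: "G *v x = l *\<^sub>R x - A *v x" for x
    by (simp add: G_def matrix_vector_mult_diff_rdistrib scaleR_matrix_vector_assoc[symmetric])
  have G_sym: "transpose G = G"
    using sym by (simp add: G_def vec_eq_iff transpose_def mat_def)
  have vV: "v \<in> V" and nv: "norm v = 1" using v by (auto simp: S_def)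
  have psd: "0 \<le> y \<bullet> (G *v y)" if "y \<in> V" for y
  proof (cases "y = 0")
    case False
    have "y /\<^sub>R norm y \<in> S" using that False V by (simp add: S_def subspace_scale)
    then have "(y /\<^sub>R norm y) \<bullet> (A *v (y /\<^sub>R norm y)) \<le> l" using vmax unfolding l_def by blast
    then have "(y \<bullet> (A *v y)) / (norm y)\<^sup>2 \<le> l"
      by (simp add: matrix_vector_mult_scaleR power2_eq_square divide_inverse mult_ac)
    then show ?thesis
      using False by (simp add: G inner_diff_right field_simps power2_norm_eq_inner)
  qed simp
  have "v \<bullet> (G *v v) = 0"
    using nv by (simp add: G l_def inner_diff_right power2_norm_eq_inner[symmetric])
  moreover have "G *v v \<in> V" using vV inv V by (simp add: G subspace_diff subspace_scale)
  ultimately have "(G *v v) \<bullet> (G *v v) = 0"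
    using psd_on_subspace_null_vector[OF G_sym V psd vV] by blast
  then have "A *v v = l *\<^sub>R v" by (simp add: G)
  with vV nv that show ?thesis by blast
qed

lemma symmetric_matrix_eigenvector_orthogonal_to_eigenvectors:
  fixes A :: "real^'n^'n"
  assumes sym: "transpose A = A" and eig: "\<And>b. b \<in> B \<Longrightarrow> \<exists>\<mu>. A *v b = \<mu> *\<^sub>R b"
    and "span B \<noteq> UNIV"
  obtains v l where "norm v = 1" "\<And>b. b \<in> B \<Longrightarrow> b \<bullet> v = 0" "A *v v = l *\<^sub>R v"
proof -
  define V where "V = {x. \<forall>b\<in>B. b \<bullet> x = 0}"
  have V: "subspace V" unfolding V_def subspace_def
    by (auto simp: inner_add_right inner_scaleR_right)
  obtain a where "a \<noteq> 0" "\<And>x. x \<in> span B \<Longrightarrow> a \<bullet> x = 0"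
    using \<open>span B \<noteq> UNIV\<close> span_not_UNIV_orthogonal by blast
  then have "a \<in> V" "a \<noteq> 0" by (auto simp: V_def inner_commute span_base)
  then have nontrivial: "V \<noteq> {0}" by blast
  have "b \<bullet> (A *v x) = 0" if "x \<in> V" "b \<in> B" for x b
  proof -
    obtain \<mu> where "A *v b = \<mu> *\<^sub>R b" using eig \<open>b \<in> B\<close> by blast
    then show ?thesis using that inner_matrix_vector_mult_symmetric[OF sym, of b x]
      by (simp add: V_def)
  qed
  then have "A *v x \<in> V" if "x \<in> V" for x using that by (simp add: V_def)
  then obtain v l where v: "v \<in> V" "norm v = 1" "A *v v = l *\<^sub>R v"
    using symmetric_matrix_eigenvector_in_invariant_subspace[OF sym V nontrivial] by blast
  show ?thesis by (rule that[OF v(2) _ v(3)]) (use v(1) in \<open>simp add: V_def\<close>)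
qed

definition orthonormal_basis :: "'a::real_inner set \<Rightarrow> bool" where
  "orthonormal_basis B \<longleftrightarrow>
     finite B \<and> pairwise orthogonal B \<and> (\<forall>b\<in>B. norm b = 1) \<and> span B = UNIV"

theorem symmetric_matrix_orthonormal_eigenbasis:
  fixes A :: "real^'n^'n"
  assumes sym: "transpose A = A"
  obtains B where "orthonormal_basis B" "\<And>b. b \<in> B \<Longrightarrow> \<exists>\<mu>. A *v b = \<mu> *\<^sub>R b"
proof -
  define eigenset where "eigenset B \<longleftrightarrow> finite B \<and> pairwise orthogonal B \<and> (\<forall>b\<in>B. norm b = 1)
           \<and> (\<forall>b\<in>B. \<exists>\<mu>. A *v b = \<mu> *\<^sub>R b)" for B :: "(real^'n) set"
  have indep: "independent B" if "eigenset B" for B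
    using that unfolding eigenset_def by (intro pairwise_orthogonal_independent) auto
  have "\<exists>B. eigenset B \<and> card B = k" if "k \<le> DIM(real^'n)" for k
    using that
  proof (induction k)
    case 0
    show ?case by (rule exI[of _ "{}"]) (simp add: eigenset_def)
  next
    case (Suc k)
    then obtain B where B: "eigenset B" "card B = k" by auto
    have "span B \<noteq> UNIV"
    proof
      assume "span B = UNIV"
      then have "dim B = DIM(real^'n)" by (metis dim_UNIV dim_span)
      then show False using Suc.prems B dim_eq_card_independent[OF indep[OF B(1)]] by simp
    qed
    then obtain v l where v: "norm v = 1" "\<And>b. b \<in> B \<Longrightarrow> b \<bullet> v = 0" "A *v v = l *\<^sub>R v"
      using symmetric_matrix_eigenvector_orthogonal_to_eigenvectors[OF sym] B(1)
      by (metis eigenset_def)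
    have "v \<notin> B"
    proof
      assume "v \<in> B"
      then have "v \<bullet> v = 0" using v(2) by blast
      then show False using v(1) by (simp add: norm_eq_1)
    qed
    then have "eigenset (insert v B) \<and> card (insert v B) = Suc k"
      using B v by (auto simp: eigenset_def pairwise_insert orthogonal_def inner_commute)
    then show ?case by blast
  qed
  then obtain B where B: "eigenset B" "card B = DIM(real^'n)" by blast
  then have "span B = UNIV"
    using card_eq_dim[of B UNIV] indep[OF B(1)] B(1) by (auto simp: eigenset_def)
  with B(1) that show ?thesis by (auto simp: eigenset_def orthonormal_basis_def)
qed

lemma orthonormal_basis_inner:
  assumes "orthonormal_basis B" "b \<in> B" "c \<in> B"
  shows "b \<bullet> c = (if b = c then 1 else 0)"
  using assms by (auto simp: orthonormal_basis_def pairwise_def orthogonal_def norm_eq_1)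

lemma orthonormal_basis_expansion:
  assumes "orthonormal_basis B"
  shows "(\<Sum>b\<in>B. (x \<bullet> b) *\<^sub>R b) = x"
  using assms orthonormal_basis_expand[of B x] by (auto simp: orthonormal_basis_def)

lemma matrix_eq_on_spanning_set:
  fixes A C :: "real^'n^'m"
  assumes "span B = UNIV" "\<And>b. b \<in> B \<Longrightarrow> A *v b = C *v b"
  shows "A = C"
proof -
  have "A *v x = C *v x" for x
    using real_vector.linear_eq_on_span[OF matrix_vector_mul_linear matrix_vector_mul_linear, of B A C x] assms
    by simp
  then show ?thesis by (simp add: matrix_eq)
qed

lemma outer_mult_vector: "outer x y *v v = (y \<bullet> v) *\<^sub>R x"
  by (simp add: outer_def vec_eq_iff matrix_vector_mult_def inner_vec_def sum_distrib_left mult_ac)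

lemma sum_matrix_vector_mult: "(\<Sum>b\<in>B. M b) *v x = (\<Sum>b\<in>B. M b *v x)"
  by (induction B rule: infinite_finite_induct) (simp_all add: matrix_vector_mult_add_rdistrib)

lemma sum_outer_mult_basis_vector:
  assumes B: "orthonormal_basis B" and c: "c \<in> B"
  shows "(\<Sum>b\<in>B. f b *\<^sub>R outer b b) *v c = f c *\<^sub>R c"
proof -
  have "(\<Sum>b\<in>B. f b *\<^sub>R outer b b) *v c = (\<Sum>b\<in>B. (f b * (b \<bullet> c)) *\<^sub>R b)"
    by (simp add: sum_matrix_vector_mult scaleR_matrix_vector_assoc[symmetric] outer_mult_vector)
  also have "\<dots> = (\<Sum>b\<in>B. if b = c then f c *\<^sub>R c else 0)"
    by (rule sum.cong) (auto simp: orthonormal_basis_inner[OF B _ c])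
  also have "\<dots> = f c *\<^sub>R c"
    using B c by (simp add: orthonormal_basis_def)
  finally show ?thesis .
qed

lemma spd_mat_sum_outer:
  assumes B: "orthonormal_basis B" and pos: "\<And>b. b \<in> B \<Longrightarrow> f b > 0"
  shows "spd_mat (\<Sum>b\<in>B. f b *\<^sub>R outer b b)" (is "spd_mat ?M")
proof -
  have "transpose ?M = ?M"
    by (simp add: vec_eq_iff transpose_def outer_def mult.commute)
  moreover have "x \<bullet> (?M *v x) > 0" if "x \<noteq> 0" for x
  proof -
    have quad: "x \<bullet> (?M *v x) = (\<Sum>b\<in>B. f b * (b \<bullet> x)\<^sup>2)"
      by (simp add: sum_matrix_vector_mult scaleR_matrix_vector_assoc[symmetric] outer_mult_vector
          inner_sum_right power2_eq_square inner_commute mult.assoc)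
    have "\<exists>b\<in>B. b \<bullet> x \<noteq> 0"
    proof (rule ccontr)
      assume "\<not> (\<exists>b\<in>B. b \<bullet> x \<noteq> 0)"
      then have "(\<Sum>b\<in>B. (x \<bullet> b) *\<^sub>R b) = 0" by (simp add: inner_commute)
      then show False using \<open>x \<noteq> 0\<close> orthonormal_basis_expansion[OF B, of x] by simp
    qed
    then obtain b where "b \<in> B" "b \<bullet> x \<noteq> 0" by blast
    then have "(\<Sum>b\<in>B. f b * (b \<bullet> x)\<^sup>2) > 0"
      using B pos by (intro sum_pos2[of B b]) (auto simp: orthonormal_basis_def less_imp_le)
    then show ?thesis by (simp add: quad)
  qed
  ultimately show ?thesis by (simp add: spd_mat_def)
qed

lemma spd_mat_imp_symmetric: "spd_mat S \<Longrightarrow> transpose S = S"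
  by (simp add: spd_mat_def)

lemma spd_mat_nonzero_pos: "spd_mat S \<Longrightarrow> x \<noteq> 0 \<Longrightarrow> x \<bullet> (S *v x) > 0"
  by (simp add: spd_mat_def)

lemma spd_mat_sqrt_exists:
  assumes C: "spd_mat C"
  shows "\<exists>S. spd_mat S \<and> S ** S = C"
proof -
  obtain B where B: "orthonormal_basis B" and eig: "\<And>b. b \<in> B \<Longrightarrow> \<exists>\<mu>. C *v b = \<mu> *\<^sub>R b"
    using symmetric_matrix_orthonormal_eigenbasis[OF spd_mat_imp_symmetric[OF C]] by blast
  define \<mu> where "\<mu> b = b \<bullet> (C *v b)" for b
  have Cb: "C *v b = \<mu> b *\<^sub>R b" and \<mu>_pos: "\<mu> b > 0" if "b \<in> B" for b
  proof -
    have "norm b = 1" using B that by (simp add: orthonormal_basis_def)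
    then show "C *v b = \<mu> b *\<^sub>R b" using eig[OF that] by (auto simp: \<mu>_def norm_eq_1)
    have "b \<noteq> 0" using \<open>norm b = 1\<close> by auto
    then show "\<mu> b > 0" using spd_mat_nonzero_pos[OF C] by (simp add: \<mu>_def)
  qed
  define S where "S = (\<Sum>b\<in>B. sqrt (\<mu> b) *\<^sub>R outer b b)"
  have Sb: "S *v b = sqrt (\<mu> b) *\<^sub>R b" if "b \<in> B" for b
    unfolding S_def by (rule sum_outer_mult_basis_vector[OF B that])
  have "spd_mat S" unfolding S_def by (rule spd_mat_sum_outer[OF B]) (simp add: \<mu>_pos)
  moreover have "S ** S = C"
  proof (rule matrix_eq_on_spanning_set)
    show "span B = UNIV" using B by (simp add: orthonormal_basis_def)
    show "(S ** S) *v b = C *v b" if "b \<in> B" for b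
      using that \<mu>_pos[OF that]
      by (simp add: matrix_vector_mul_assoc[symmetric] Sb Cb matrix_vector_mult_scaleR)
  qed
  ultimately show ?thesis by blast
qed

text \<open>\<open>D = S - T\<close> satisfies \<open>S D + D T = 0\<close>, which forces every eigenvalue of the
  symmetric matrix \<open>D\<close> to vanish because \<open>S\<close> and \<open>T\<close> are positive definite.\<close>
lemma spd_mat_sqrt_unique:
  assumes S: "spd_mat S" and T: "spd_mat T" and eq: "S ** S = T ** T"
  shows "S = T"
proof -
  define D where "D = S - T"
  have D_sym: "transpose D = D"
    using S T by (simp add: D_def spd_mat_def vec_eq_iff transpose_def)
  have SDT: "S *v (D *v x) + D *v (T *v x) = 0" for x
  proof -
    have "S *v (D *v x) + D *v (T *v x) = (S ** S) *v x - (T ** T) *v x"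
      by (simp add: D_def matrix_vector_mul_assoc[symmetric] algebra_simps)
    then show ?thesis by (simp add: eq)
  qed
  obtain B where B: "orthonormal_basis B" and eig: "\<And>b. b \<in> B \<Longrightarrow> \<exists>l. D *v b = l *\<^sub>R b"
    using symmetric_matrix_orthonormal_eigenbasis[OF D_sym] by blast
  have "D = 0"
  proof (rule matrix_eq_on_spanning_set)
    show "span B = UNIV" using B by (simp add: orthonormal_basis_def)
    fix b assume "b \<in> B"
    then obtain l where l: "D *v b = l *\<^sub>R b" using eig by blast
    have "b \<noteq> 0" using B \<open>b \<in> B\<close> by (auto simp: orthonormal_basis_def)
    have "0 = b \<bullet> (S *v (D *v b) + D *v (T *v b))" by (simp add: SDT)
    also have "\<dots> = l * (b \<bullet> (S *v b) + b \<bullet> (T *v b))"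
      by (simp add: inner_add_right l matrix_vector_mult_scaleR distrib_left
          inner_matrix_vector_mult_symmetric[OF D_sym, symmetric])
    finally have "l = 0"
      using spd_mat_nonzero_pos[OF S \<open>b \<noteq> 0\<close>] spd_mat_nonzero_pos[OF T \<open>b \<noteq> 0\<close>] by simp
    then show "D *v b = 0 *v b" by (simp add: l)
  qed
  then show ?thesis by (simp add: D_def)
qed

lemma spd_sqrt:
  assumes "spd_mat C"
  shows "spd_mat (spd_sqrt C)" "spd_sqrt C ** spd_sqrt C = C"
proof -
  have "\<exists>!S. spd_mat S \<and> S ** S = C"
    using spd_mat_sqrt_exists[OF assms] spd_mat_sqrt_unique by metis
  then have "spd_mat (spd_sqrt C) \<and> spd_sqrt C ** spd_sqrt C = C"
    unfolding spd_sqrt_def by (rule theI')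
  then show "spd_mat (spd_sqrt C)" "spd_sqrt C ** spd_sqrt C = C" by auto
qed

lemma spd_mat_invertible:
  assumes "spd_mat S"
  shows "invertible S"
proof -
  have "x = 0" if "S *v x = 0" for x
    using spd_mat_nonzero_pos[OF assms, of x] that by fastforce
  then show ?thesis
    by (simp add: invertible_left_inverse matrix_left_invertible_ker)
qed

lemma matrix_inv_inverse:
  assumes "invertible A"
  shows "matrix_inv A ** A = mat 1" "A ** matrix_inv A = mat 1"
proof -
  have "A ** matrix_inv A = mat 1 \<and> matrix_inv A ** A = mat 1"
    using assms unfolding invertible_def matrix_inv_def by (rule someI_ex)
  then show "matrix_inv A ** A = mat 1" "A ** matrix_inv A = mat 1" by auto
qed

lemma inv_sqrt_inverse:
  assumes "spd_mat C"
  shows "inv_sqrt C ** spd_sqrt C = mat 1" "spd_sqrt C ** inv_sqrt C = mat 1"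
  using matrix_inv_inverse[OF spd_mat_invertible[OF spd_sqrt(1)[OF assms]]] by (simp_all add: inv_sqrt_def)

lemma frob_norm_eq_norm: "frob_norm A = norm A"
  by (simp add: frob_norm_def norm_eq_sqrt_inner inner_vec_def power2_eq_square)

lemma power2_norm_vec: "(norm x)\<^sup>2 = (\<Sum>i\<in>UNIV. (norm (x $ i))\<^sup>2)"
  by (simp add: norm_vec_def L2_set_def sum_nonneg)

lemma norm_transpose: "norm (transpose A) = norm (A :: real^'n^'m)"
  unfolding frob_norm_eq_norm[symmetric] frob_norm_def transpose_def
  by (simp add: sum.swap[of _ "UNIV :: 'm set"])

lemma norm_matrix_vector_mult_le: "norm ((A :: real^'n^'m) *v x) \<le> norm A * norm x"
proof (rule power2_le_imp_le)
  have "(norm (A *v x))\<^sup>2 = (\<Sum>i\<in>UNIV. (A $ i \<bullet> x)\<^sup>2)"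
    by (simp add: power2_norm_vec matrix_vector_mult_def inner_vec_def)
  also have "\<dots> \<le> (\<Sum>i\<in>UNIV. (norm (A $ i) * norm x)\<^sup>2)"
    by (intro sum_mono) (simp add: power_mult_distrib Cauchy_Schwarz_ineq power2_norm_eq_inner)
  also have "\<dots> = (norm A * norm x)\<^sup>2"
    by (simp add: power2_norm_vec[of A] power_mult_distrib sum_distrib_right)
  finally show "(norm (A *v x))\<^sup>2 \<le> (norm A * norm x)\<^sup>2" .
qed simp

lemma norm_matrix_mult_le: "norm ((A :: real^'n^'m) ** B) \<le> norm A * norm B"
proof (rule power2_le_imp_le)
  have row: "(A ** B) $ i = transpose B *v A $ i" for i
    by (simp add: vec_eq_iff matrix_matrix_mult_def matrix_vector_mult_def transpose_def mult.commute)
  have "(norm (A ** B))\<^sup>2 = (\<Sum>i\<in>UNIV. (norm (transpose B *v A $ i))\<^sup>2)"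
    by (simp add: power2_norm_vec[of "A ** B"] row)
  also have "\<dots> \<le> (\<Sum>i\<in>UNIV. (norm B * norm (A $ i))\<^sup>2)"
    by (intro sum_mono power_mono norm_ge_zero)
      (metis norm_matrix_vector_mult_le norm_transpose)
  also have "\<dots> = (norm A * norm B)\<^sup>2"
    by (simp add: power2_norm_vec[of A] power_mult_distrib sum_distrib_left mult.commute)
  finally show "(norm (A ** B))\<^sup>2 \<le> (norm A * norm B)\<^sup>2" .
qed simp

lemma norm_le_conjugated:
  fixes E :: "real^'n^'m"
  assumes "Sd ** Bd = mat 1" "Ah ** Sh = mat 1"
  shows "norm E \<le> norm Sd * norm Sh * norm (Bd ** E ** Ah)"
proof -
  have "Sd ** (Bd ** E ** Ah) ** Sh = (Sd ** Bd) ** E ** (Ah ** Sh)"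
    by (simp only: matrix_mul_assoc)
  then have "norm E = norm (Sd ** (Bd ** E ** Ah) ** Sh)" by (simp add: assms)
  also have "\<dots> \<le> norm Sd * norm (Bd ** E ** Ah) * norm Sh"
    by (meson norm_matrix_mult_le order_trans mult_right_mono norm_ge_zero)
  finally show ?thesis by (simp add: mult_ac)
qed

lemma borel_measurable_matrix_vector_mult [measurable (raw)]:
  "f \<in> borel_measurable M \<Longrightarrow> (\<lambda>x. (A :: real^'n^'m) *v f x) \<in> borel_measurable M"
  by (rule borel_measurable_continuous_on[OF matrix_vector_mult_linear_continuous_on])

lemma nn_integral_pair_measure_mult:
  assumes N: "sigma_finite_measure N"
    and [measurable]: "f \<in> borel_measurable M" "g \<in> borel_measurable N"
  shows "(\<integral>\<^sup>+p. f (fst p) * g (snd p) \<partial>(M \<Otimes>\<^sub>M N)) = (\<integral>\<^sup>+x. f x \<partial>M) * (\<integral>\<^sup>+y. g y \<partial>N)"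
proof -
  have "(\<integral>\<^sup>+p. f (fst p) * g (snd p) \<partial>(M \<Otimes>\<^sub>M N)) = (\<integral>\<^sup>+x. \<integral>\<^sup>+y. f x * g y \<partial>N \<partial>M)"
    using sigma_finite_measure.nn_integral_fst[OF N, of "\<lambda>p. f (fst p) * g (snd p)" M] by simp
  also have "\<dots> = (\<integral>\<^sup>+x. f x \<partial>M) * (\<integral>\<^sup>+y. g y \<partial>N)"
    by (simp add: nn_integral_cmult nn_integral_multc)
  finally show ?thesis .
qed

lemma abs_first_order_term_le:
  "\<bar>first_order_term Sh Sd h d dhat z z'\<bar> \<le>
     (norm (Sd *v (dhat z' - d z')) * norm (Sd *v d z)
       + norm (Sd *v d z') * norm (Sd *v (dhat z - d z)))
     * (norm (Sh *v h z') * norm (Sh *v h z))"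
proof -
  define u where "u = (Sd *v (dhat z' - d z')) \<bullet> (Sd *v d z)"
  define w where "w = (Sd *v d z') \<bullet> (Sd *v (dhat z - d z))"
  define c where "c = (Sh *v h z') \<bullet> (Sh *v h z)"
  have "first_order_term Sh Sd h d dhat z z' = - (u * c) - w * c"
    by (simp add: first_order_term_def u_def w_def c_def matrix_vector_mult_diff_distrib)
  then have "\<bar>first_order_term Sh Sd h d dhat z z'\<bar> \<le> (\<bar>u\<bar> + \<bar>w\<bar>) * \<bar>c\<bar>"
    by (simp add: abs_mult[symmetric] distrib_right)
  also have "\<dots> \<le> (norm (Sd *v (dhat z' - d z')) * norm (Sd *v d z)
        + norm (Sd *v d z') * norm (Sd *v (dhat z - d z)))
      * (norm (Sh *v h z') * norm (Sh *v h z))"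
    unfolding u_def w_def c_def by (intro mult_mono add_mono Cauchy_Schwarz_ineq2) auto
  finally show ?thesis .
qed

lemma abs_IF_score_diff_le:
  assumes dz: "norm (dhat z - d z) \<le> K z * e" and dz': "norm (dhat z' - d z') \<le> K z' * e"
  shows "\<bar>IF_score Sh Sd h dhat z z' - IF_score Sh Sd h d z z'\<bar>
    \<le> norm Sd * e * (norm (Sd *v d z) * norm (Sh *v h z) * (K z' * norm (Sh *v h z'))
        + K z * norm (Sh *v h z) * (norm (Sd *v d z') * norm (Sh *v h z')))
      + \<bar>remainder_term Sh Sd h d dhat z z'\<bar>"
proof -
  have whitened_diff: "norm (Sd *v (dhat x - d x)) \<le> norm Sd * (K x * e)"
    if "norm (dhat x - d x) \<le> K x * e" for x
    using norm_matrix_vector_mult_le[of Sd] that by (meson mult_left_mono norm_ge_zero order_trans)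
  have "\<bar>first_order_term Sh Sd h d dhat z z'\<bar>
      \<le> (norm Sd * (K z' * e) * norm (Sd *v d z) + norm (Sd *v d z') * (norm Sd * (K z * e)))
        * (norm (Sh *v h z') * norm (Sh *v h z))"
    using abs_first_order_term_le[of Sh Sd h d dhat z z'] whitened_diff[OF dz] whitened_diff[OF dz']
    by (smt (verit) add_mono mult_right_mono mult_left_mono mult_nonneg_nonneg norm_ge_zero)
  also have "\<dots> = norm Sd * e * (norm (Sd *v d z) * norm (Sh *v h z) * (K z' * norm (Sh *v h z'))
        + K z * norm (Sh *v h z) * (norm (Sd *v d z') * norm (Sh *v h z')))"
    by (simp add: algebra_simps)
  finally show ?thesis
    unfolding remainder_term_def by linarith
qed

lemma nn_integral_IF_score_diff_le:
  fixes P Q :: "'z measure" and Sh :: "real^'n^'n" and Sd :: "real^'m^'m"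
    and h :: "'z \<Rightarrow> real^'n" and d dhat :: "'z \<Rightarrow> real^'m" and K :: "'z \<Rightarrow> real"
  defines "F \<equiv> \<lambda>M. \<integral>\<^sup>+z. ennreal (norm (Sd *v d z) * norm (Sh *v h z)) \<partial>M"
    and "G \<equiv> \<lambda>M. \<integral>\<^sup>+z. ennreal (K z * norm (Sh *v h z)) \<partial>M"
  assumes Q: "sigma_finite_measure Q"
    and [measurable]: "h \<in> borel_measurable P" "h \<in> borel_measurable Q"
      "d \<in> borel_measurable P" "d \<in> borel_measurable Q"
      "dhat \<in> borel_measurable P" "dhat \<in> borel_measurable Q"
      "K \<in> borel_measurable P" "K \<in> borel_measurable Q"
    and K_nonneg: "\<And>z. K z \<ge> 0" and e_nonneg: "e \<ge> 0"
    and dP: "\<And>z. z \<in> space P \<Longrightarrow> norm (dhat z - d z) \<le> K z * e"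
    and dQ: "\<And>z. z \<in> space Q \<Longrightarrow> norm (dhat z - d z) \<le> K z * e"
  shows "(\<integral>\<^sup>+p. ennreal \<bar>IF_score Sh Sd h dhat (fst p) (snd p)
                      - IF_score Sh Sd h d (fst p) (snd p)\<bar> \<partial>(P \<Otimes>\<^sub>M Q))
    \<le> ennreal (norm Sd * e) * (F P * G Q + G P * F Q)
      + (\<integral>\<^sup>+p. ennreal \<bar>remainder_term Sh Sd h d dhat (fst p) (snd p)\<bar> \<partial>(P \<Otimes>\<^sub>M Q))"
    (is "?lhs \<le> ennreal ?c * _ + ?R")
proof -
  define f where "f = (\<lambda>z. norm (Sd *v d z) * norm (Sh *v h z))"
  define g where "g = (\<lambda>z. K z * norm (Sh *v h z))"
  have [measurable]: "f \<in> borel_measurable P" "f \<in> borel_measurable Q"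
    "g \<in> borel_measurable P" "g \<in> borel_measurable Q"
    unfolding f_def g_def by measurable
  have nonneg: "f z \<ge> 0" "g z \<ge> 0" "?c \<ge> 0" for z by (simp_all add: f_def g_def K_nonneg e_nonneg)
  have [measurable]:
      "(\<lambda>p. remainder_term Sh Sd h d dhat (fst p) (snd p)) \<in> borel_measurable (P \<Otimes>\<^sub>M Q)"
    unfolding remainder_term_def IF_score_def first_order_term_def Let_def by measurable
  let ?fg = "\<lambda>p. ennreal (f (fst p)) * ennreal (g (snd p)) + ennreal (g (fst p)) * ennreal (f (snd p))"
  have "?lhs \<le> (\<integral>\<^sup>+p. ennreal ?c * ?fg p
      + ennreal \<bar>remainder_term Sh Sd h d dhat (fst p) (snd p)\<bar> \<partial>(P \<Otimes>\<^sub>M Q))"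
  proof (rule nn_integral_mono)
    fix p assume "p \<in> space (P \<Otimes>\<^sub>M Q)"
    then have "fst p \<in> space P" "snd p \<in> space Q" by (auto simp: space_pair_measure)
    from abs_IF_score_diff_le[OF dP[OF this(1)] dQ[OF this(2)], of Sh Sd h]
    show "ennreal \<bar>IF_score Sh Sd h dhat (fst p) (snd p) - IF_score Sh Sd h d (fst p) (snd p)\<bar>
        \<le> ennreal ?c * ?fg p + ennreal \<bar>remainder_term Sh Sd h d dhat (fst p) (snd p)\<bar>"
      using nonneg by (simp add: f_def g_def ennreal_leI flip: ennreal_plus ennreal_mult)
  qed
  also have "\<dots> = ennreal ?c * (\<integral>\<^sup>+p. ?fg p \<partial>(P \<Otimes>\<^sub>M Q)) + ?R"
    by (simp add: nn_integral_add nn_integral_cmult)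
  also have "(\<integral>\<^sup>+p. ?fg p \<partial>(P \<Otimes>\<^sub>M Q)) = F P * G Q + G P * F Q"
  proof -
    have "(\<integral>\<^sup>+p. ennreal (f (fst p)) * ennreal (g (snd p)) \<partial>(P \<Otimes>\<^sub>M Q)) = F P * G Q"
      "(\<integral>\<^sup>+p. ennreal (g (fst p)) * ennreal (f (snd p)) \<partial>(P \<Otimes>\<^sub>M Q)) = G P * F Q"
      unfolding F_def G_def f_def g_def by (rule nn_integral_pair_measure_mult[OF Q]; measurable)+
    then show ?thesis by (simp add: nn_integral_add)
  qed
  finally show ?thesis .
qed

lemma ennreal_first_order_plus_quadratic_le:
  fixes a e J \<kappa> x \<rho> c :: real
  assumes a: "0 \<le> a" and e: "0 \<le> e" "e \<le> \<kappa> * x" and J: "0 \<le> J"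
    and x: "0 \<le> x" "x \<le> \<rho>" and R: "R \<le> ennreal (c * x\<^sup>2)"
  shows "ennreal (a * e) * ennreal J + R \<le> ennreal ((a * \<kappa> * J + max c 0 * \<rho>) * x)"
proof -
  have first: "a * e * J \<le> a * \<kappa> * J * x"
    using mult_left_mono[OF e(2), of "a * J"] a J by (simp add: mult_ac)
  have "0 \<le> a * e * J" using a e J by simp
  with first have first_nonneg: "0 \<le> a * \<kappa> * J * x" by linarith
  from first have linear: "ennreal (a * e) * ennreal J \<le> ennreal (a * \<kappa> * J * x)"
    using a e J by (simp add: ennreal_leI flip: ennreal_mult)
  have "c * x\<^sup>2 \<le> max c 0 * (x * x)"
    by (simp add: power2_eq_square mult_right_mono)
  also have "\<dots> \<le> max c 0 * \<rho> * x"
    using x by (simp add: mult.assoc mult_left_mono mult_right_mono)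
  finally have quadratic: "R \<le> ennreal (max c 0 * \<rho> * x)"
    using R by (meson ennreal_leI order_trans)
  have "ennreal (a * e) * ennreal J + R \<le> ennreal (a * \<kappa> * J * x) + ennreal (max c 0 * \<rho> * x)"
    using linear quadratic by (rule add_mono)
  also have "\<dots> = ennreal ((a * \<kappa> * J + max c 0 * \<rho>) * x)"
    using first_nonneg x by (simp add: distrib_right flip: ennreal_plus)
  finally show ?thesis .
qed

theorem proposition3:
  fixes P Q :: "'z measure"
    and W :: "real^'n^'m"
    and h :: "'z \<Rightarrow> real^'n"
    and grad :: "real^'n^'m \<Rightarrow> 'z \<Rightarrow> real^'m"
    and K :: "'z \<Rightarrow> real"
    and \<rho> c_rem :: real
  defines "d \<equiv> grad W"
    and "Ch \<equiv> (LINT z|P. outer (h z) (h z))"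
    and "Cd \<equiv> (LINT z|P. outer (grad W z) (grad W z))"
  assumes P: "prob_space P" and Q: "prob_space Q"
    and h_meas: "h \<in> borel_measurable P" "h \<in> borel_measurable Q"
    and grad_meas: "\<And>V. grad V \<in> borel_measurable P" "\<And>V. grad V \<in> borel_measurable Q"
    and int_Ch: "integrable P (\<lambda>z. outer (h z) (h z))"
    and int_Cd: "integrable P (\<lambda>z. outer (grad W z) (grad W z))"
    and spd_Ch: "spd_mat Ch" and spd_Cd: "spd_mat Cd"
    \<comment> \<open>(B1)\<close>
    and B1P: "(\<integral>\<^sup>+ z. ennreal (norm (inv_sqrt Cd *v d z) * norm (inv_sqrt Ch *v h z)) \<partial>P) < \<infinity>"
    and B1Q: "(\<integral>\<^sup>+ z. ennreal (norm (inv_sqrt Cd *v d z) * norm (inv_sqrt Ch *v h z)) \<partial>Q) < \<infinity>"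
    \<comment> \<open>(B2)\<close>
    and K_meas: "K \<in> borel_measurable P" "K \<in> borel_measurable Q"
    and K_nonneg: "\<And>z. K z \<ge> 0"
    and B2P: "\<And>E z. z \<in> space P \<Longrightarrow> norm (grad (W - E) z - d z) \<le> K z * frob_norm E"
    and B2Q: "\<And>E z. z \<in> space Q \<Longrightarrow> norm (grad (W - E) z - d z) \<le> K z * frob_norm E"
    and B2P_int: "(\<integral>\<^sup>+ z. ennreal (K z * norm (inv_sqrt Ch *v h z)) \<partial>P) < \<infinity>"
    and B2Q_int: "(\<integral>\<^sup>+ z. ennreal (K z * norm (inv_sqrt Ch *v h z)) \<partial>Q) < \<infinity>"
    \<comment> \<open>(B3)\<close>
    and rho_pos: "\<rho> > 0"
    and B3: "\<And>E. frob_norm (inv_sqrt Cd ** (W - (W - E)) ** inv_sqrt Ch) \<le> \<rho> \<Longrightarrow>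
         (\<integral>\<^sup>+ p. ennreal \<bar>remainder_term (inv_sqrt Ch) (inv_sqrt Cd) h d (grad (W - E)) (fst p) (snd p)\<bar>
             \<partial>(P \<Otimes>\<^sub>M Q))
           \<le> ennreal (c_rem * (frob_norm (inv_sqrt Cd ** E ** inv_sqrt Ch))^2)"
  shows "\<exists>C\<kappa>::real. C\<kappa> > 0 \<and> (\<forall>E. frob_norm (inv_sqrt Cd ** E ** inv_sqrt Ch) \<le> \<rho> \<longrightarrow>
     (\<integral>\<^sup>+ p. ennreal \<bar>IF_score (inv_sqrt Ch) (inv_sqrt Cd) h (grad (W - E)) (fst p) (snd p)
                       - IF_score (inv_sqrt Ch) (inv_sqrt Cd) h d (fst p) (snd p)\<bar> \<partial>(P \<Otimes>\<^sub>M Q))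
       \<le> ennreal (C\<kappa> * frob_norm (inv_sqrt Cd ** E ** inv_sqrt Ch)))"
proof -
  interpret Q: prob_space Q by (rule Q)
  note [measurable] = h_meas grad_meas K_meas
  let ?x = "\<lambda>E. frob_norm (inv_sqrt Cd ** E ** inv_sqrt Ch)"
  let ?IF = "\<lambda>d'. IF_score (inv_sqrt Ch) (inv_sqrt Cd) h d'"
  let ?R = "\<lambda>E. remainder_term (inv_sqrt Ch) (inv_sqrt Cd) h d (grad (W - E))"
  let ?F = "\<lambda>M. \<integral>\<^sup>+z. ennreal (norm (inv_sqrt Cd *v d z) * norm (inv_sqrt Ch *v h z)) \<partial>M"
  let ?G = "\<lambda>M. \<integral>\<^sup>+z. ennreal (K z * norm (inv_sqrt Ch *v h z)) \<partial>M"
  define J where "J = enn2real (?F P * ?G Q + ?G P * ?F Q)"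
  have J: "?F P * ?G Q + ?G P * ?F Q = ennreal J" "J \<ge> 0"
    using B1P B1Q B2P_int B2Q_int by (simp_all add: J_def ennreal_mult_less_top)
  define \<kappa> where "\<kappa> = norm (spd_sqrt Cd) * norm (spd_sqrt Ch)"
  have whitening: "frob_norm E \<le> \<kappa> * ?x E" for E
    using norm_le_conjugated[OF inv_sqrt_inverse(2)[OF spd_Cd] inv_sqrt_inverse(1)[OF spd_Ch]]
    by (simp add: \<kappa>_def frob_norm_eq_norm)
  define C\<kappa> where "C\<kappa> = norm (inv_sqrt Cd) * \<kappa> * J + max c_rem 0 * \<rho> + 1"
  have "C\<kappa> > 0" using J(2) rho_pos by (simp add: C\<kappa>_def \<kappa>_def add_nonneg_pos)
  moreover have "(\<integral>\<^sup>+p. ennreal \<bar>?IF (grad (W - E)) (fst p) (snd p) - ?IF d (fst p) (snd p)\<bar> \<partial>(P \<Otimes>\<^sub>M Q))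
      \<le> ennreal (C\<kappa> * ?x E)" if small: "?x E \<le> \<rho>" for E
  proof -
    have "(\<integral>\<^sup>+p. ennreal \<bar>?IF (grad (W - E)) (fst p) (snd p) - ?IF d (fst p) (snd p)\<bar> \<partial>(P \<Otimes>\<^sub>M Q))
      \<le> ennreal (norm (inv_sqrt Cd) * frob_norm E) * ennreal J
        + (\<integral>\<^sup>+p. ennreal \<bar>?R E (fst p) (snd p)\<bar> \<partial>(P \<Otimes>\<^sub>M Q))"
      unfolding J(1)[symmetric] using B2P B2Q K_nonneg
      by (intro nn_integral_IF_score_diff_le Q.sigma_finite_measure_axioms)
        (simp_all add: d_def frob_norm_eq_norm)
    also have "\<dots> \<le> ennreal ((norm (inv_sqrt Cd) * \<kappa> * J + max c_rem 0 * \<rho>) * ?x E)"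
      using B3[of E] small whitening[of E] J(2)
      by (intro ennreal_first_order_plus_quadratic_le) (simp_all add: frob_norm_eq_norm)
    also have "\<dots> \<le> ennreal (C\<kappa> * ?x E)"
      by (intro ennreal_leI mult_right_mono) (simp_all add: C\<kappa>_def frob_norm_eq_norm)
    finally show ?thesis .
  qed
  ultimately show ?thesis by blast
qed

end
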